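(* Let $E$ be a finite set and let $\omega:2^E\to[0,\infty)$ be Rayleigh. Then $\omega$ is logarithmically submodular: for all $S,T\subseteq E$, $\omega(S)\omega(T)\ge\omega(S\cap T)\,\omega(S\cup T)$.
   Context: For $\omega:2^E\to[0,\infty)$ not identically zero, let $Z(\omega;\mathbf{y})=\sum_{S\subseteq E}\omega(S)\prod_{e\in S}y_e$ in commuting indeterminates $\mathbf{y}=\{y_e:e\in E\}$. Write $Z_e=\partial Z/\partial y_e$, $Z_{ef}=\partial^2Z/\partial y_e\partial y_f$ and $\Delta Z\{e,f\}=Z_eZ_f-Z_{ef}Z$. $\omega$ is Rayleigh if $\Delta Z\{e,f\}(\mathbf{y})\ge0$ for all distinct $e,f\in E$ and all $\mathbf{y}$ with all $y_c>0$. *)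

theory Defs
  imports "HOL-Analysis.Analysis"
begin

definition genpoly :: "'a set \<Rightarrow> ('a set \<Rightarrow> real) \<Rightarrow> ('a \<Rightarrow> real) \<Rightarrow> real" where
  "genpoly E \<omega> y = (\<Sum>S\<in>Pow E. \<omega> S * (\<Prod>e\<in>S. y e))"

definition pderiv_var :: "'a \<Rightarrow> (('a \<Rightarrow> real) \<Rightarrow> real) \<Rightarrow> ('a \<Rightarrow> real) \<Rightarrow> real" where
  "pderiv_var e F y = deriv (\<lambda>t. F (y(e := t))) (y e)"

definition rayleigh_diff :: "'a set \<Rightarrow> ('a set \<Rightarrow> real) \<Rightarrow> 'a \<Rightarrow> 'a \<Rightarrow> ('a \<Rightarrow> real) \<Rightarrow> real" where
  "rayleigh_diff E \<omega> e f y =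
     pderiv_var e (genpoly E \<omega>) y * pderiv_var f (genpoly E \<omega>) y
     - pderiv_var e (pderiv_var f (genpoly E \<omega>)) y * genpoly E \<omega> y"

definition rayleigh :: "'a set \<Rightarrow> ('a set \<Rightarrow> real) \<Rightarrow> bool" where
  "rayleigh E \<omega> \<longleftrightarrow>
     (\<forall>e\<in>E. \<forall>f\<in>E. e \<noteq> f \<longrightarrow>
        (\<forall>y. (\<forall>c\<in>E. y c > 0) \<longrightarrow> rayleigh_diff E \<omega> e f y \<ge> 0))"

end

theory Submission
  imports Defs
begin

(* As a function of y_e and y_f alone, the generating polynomial is bilinear,
   Z = a + b y_e + c y_f + d y_e y_f, its coefficients being the generating polynomials of the
   deletions and contractions of e and f, and its Rayleigh difference is the constant b c - a d.
   So the Rayleigh property gives Z(s,t) Z(s',t') <= Z(s',t) Z(s,t') whenever s <= s' and t <= t'.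
   At the point y_c = l for c in W, y_c = 1/l otherwise, this says that W -> log Z is submodular
   with respect to adding two elements, hence submodular.  At that point Z = l^|W| (omega W + O(1/l)),
   and |S Int T| + |S Un T| = |S| + |T|, so dividing by l^(|S| + |T|) and letting l tend to
   infinity gives the inequality. *)

definition deletion :: "'a \<Rightarrow> ('a set \<Rightarrow> real) \<Rightarrow> 'a set \<Rightarrow> real" where
  "deletion e \<omega> R = (if e \<in> R then 0 else \<omega> R)"

definition contraction :: "'a \<Rightarrow> ('a set \<Rightarrow> real) \<Rightarrow> 'a set \<Rightarrow> real" where
  "contraction e \<omega> R = (if e \<in> R then 0 else \<omega> (insert e R))"

lemma sum_Pow_insert:
  assumes "finite A" "a \<notin> A"
  shows "(\<Sum>X\<in>Pow (insert a A). h X) = (\<Sum>X\<in>Pow A. h X) + (\<Sum>X\<in>Pow A. h (insert a X))"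
proof -
  have "inj_on (insert a) (Pow A)"
    using assms(2) by (auto intro!: inj_onI)
  then show ?thesis
    unfolding Pow_insert using assms by (subst sum.union_disjoint) (auto simp: sum.reindex)
qed

lemma genpoly_fun_upd:
  assumes "finite E" "e \<in> E"
  shows "genpoly E \<omega> (y(e := t)) = genpoly E (deletion e \<omega>) y + t * genpoly E (contraction e \<omega>) y"
proof -
  let ?E = "E - {e}"
  have split: "(\<Sum>X\<in>Pow E. h X) = (\<Sum>X\<in>Pow ?E. h X) + (\<Sum>X\<in>Pow ?E. h (insert e X))"
    for h :: "'a set \<Rightarrow> real"
    using sum_Pow_insert[of ?E e h] assms by (simp add: insert_absorb)
  have prod_upd: "(\<Prod>c\<in>X. (y(e := t)) c) = (\<Prod>c\<in>X. y c)" if "X \<subseteq> ?E" for X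
    using that by (intro prod.cong) auto
  have prod_upd_insert: "(\<Prod>c\<in>insert e X. (y(e := t)) c) = t * (\<Prod>c\<in>X. y c)" if "X \<subseteq> ?E" for X
    using that prod_upd[OF that] finite_subset[OF that] assms(1) by (subst prod.insert) auto
  have "genpoly E \<omega> (y(e := t)) =
      (\<Sum>X\<in>Pow ?E. \<omega> X * prod y X) + t * (\<Sum>X\<in>Pow ?E. \<omega> (insert e X) * prod y X)"
    unfolding genpoly_def split sum_distrib_left
    by (intro arg_cong2[where f = "(+)"] sum.cong refl)
      (auto simp del: fun_upd_apply simp: prod_upd prod_upd_insert)
  moreover have "genpoly E (deletion e \<omega>) y = (\<Sum>X\<in>Pow ?E. \<omega> X * prod y X)"
    unfolding genpoly_def split deletion_def by (auto intro!: sum.cong)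
  moreover have "genpoly E (contraction e \<omega>) y = (\<Sum>X\<in>Pow ?E. \<omega> (insert e X) * prod y X)"
    unfolding genpoly_def split contraction_def by (auto intro!: sum.cong)
  ultimately show ?thesis
    by simp
qed

lemma pderiv_var_affine:
  assumes "\<And>t. F (y(e := t)) = p + t * q"
  shows "pderiv_var e F y = q"
proof -
  have "((\<lambda>t. p + t * q) has_real_derivative q) (at (y e))"
    by (auto intro!: derivative_eq_intros)
  then show ?thesis
    unfolding pderiv_var_def assms by (rule DERIV_imp_deriv)
qed

lemma genpoly_fun_upd2:
  assumes "finite E" "e \<in> E" "f \<in> E"
  shows "genpoly E \<omega> (y(e := s, f := t)) =
      genpoly E (deletion e (deletion f \<omega>)) y + s * genpoly E (contraction e (deletion f \<omega>)) y
    + t * genpoly E (deletion e (contraction f \<omega>)) y + s * t * genpoly E (contraction e (contraction f \<omega>)) y"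
  using genpoly_fun_upd[OF assms(1,3), of \<omega> "y(e := s)" t]
    genpoly_fun_upd[OF assms(1,2), of "deletion f \<omega>" y s]
    genpoly_fun_upd[OF assms(1,2), of "contraction f \<omega>" y s]
  by (simp add: algebra_simps)

lemma rayleigh_diff_eq:
  assumes "finite E" "e \<in> E" "f \<in> E" "e \<noteq> f"
  shows "rayleigh_diff E \<omega> e f y =
      genpoly E (contraction e (deletion f \<omega>)) y * genpoly E (deletion e (contraction f \<omega>)) y
    - genpoly E (deletion e (deletion f \<omega>)) y * genpoly E (contraction e (contraction f \<omega>)) y"
proof -
  define a where "a = genpoly E (deletion e (deletion f \<omega>)) y"
  define b where "b = genpoly E (contraction e (deletion f \<omega>)) y"
  define c where "c = genpoly E (deletion e (contraction f \<omega>)) y"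
  define d where "d = genpoly E (contraction e (contraction f \<omega>)) y"
  have Z: "genpoly E \<omega> (y(e := s, f := t)) = a + s * b + t * c + s * t * d" for s t
    unfolding a_def b_def c_def d_def by (rule genpoly_fun_upd2[OF assms(1-3)])
  have upd_e: "(y(e := s, f := t))(e := s') = y(e := s', f := t)" for s t s'
    using assms(4) by (simp add: fun_upd_twist)
  have Ze: "pderiv_var e (genpoly E \<omega>) (y(e := s, f := t)) = b + t * d" for s t
    by (rule pderiv_var_affine) (simp add: upd_e Z algebra_simps)
  have Zf: "pderiv_var f (genpoly E \<omega>) (y(e := s, f := t)) = c + s * d" for s t
    by (rule pderiv_var_affine) (simp add: Z algebra_simps)
  have Zef: "pderiv_var e (pderiv_var f (genpoly E \<omega>)) (y(e := s, f := t)) = d" for s t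
    by (rule pderiv_var_affine) (simp add: upd_e Zf)
  have "rayleigh_diff E \<omega> e f y = (b + y f * d) * (c + y e * d) - d * (a + y e * b + y f * c + y e * y f * d)"
    unfolding rayleigh_diff_def using Z[of "y e" "y f"] Ze[of "y e" "y f"] Zf[of "y e" "y f"] Zef[of "y e" "y f"]
    by simp
  then show ?thesis
    unfolding a_def b_def c_def d_def by (simp add: algebra_simps)
qed

lemma rayleigh_genpoly_fun_upd2_le:
  assumes "finite E" "e \<in> E" "f \<in> E" "e \<noteq> f" "rayleigh E \<omega>"
    and "\<forall>c\<in>E. y c > 0" "s \<le> s'" "t \<le> t'"
  shows "genpoly E \<omega> (y(e := s, f := t)) * genpoly E \<omega> (y(e := s', f := t'))
    \<le> genpoly E \<omega> (y(e := s', f := t)) * genpoly E \<omega> (y(e := s, f := t'))"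
proof -
  define a where "a = genpoly E (deletion e (deletion f \<omega>)) y"
  define b where "b = genpoly E (contraction e (deletion f \<omega>)) y"
  define c where "c = genpoly E (deletion e (contraction f \<omega>)) y"
  define d where "d = genpoly E (contraction e (contraction f \<omega>)) y"
  have Z: "genpoly E \<omega> (y(e := u, f := v)) = a + u * b + v * c + u * v * d" for u v
    unfolding a_def b_def c_def d_def by (rule genpoly_fun_upd2[OF assms(1-3)])
  have "rayleigh_diff E \<omega> e f y \<ge> 0"
    using assms(2-6) unfolding rayleigh_def by blast
  then have "b * c - a * d \<ge> 0"
    unfolding rayleigh_diff_eq[OF assms(1-4)] a_def b_def c_def d_def .
  then have "(s' - s) * (t' - t) * (b * c - a * d) \<ge> 0"
    using assms(7,8) by simp
  moreover have "genpoly E \<omega> (y(e := s', f := t)) * genpoly E \<omega> (y(e := s, f := t'))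
      - genpoly E \<omega> (y(e := s, f := t)) * genpoly E \<omega> (y(e := s', f := t'))
      = (s' - s) * (t' - t) * (b * c - a * d)"
    unfolding Z by (simp add: algebra_simps)
  ultimately show ?thesis
    by linarith
qed

lemma genpoly_pos:
  assumes "finite E" "\<And>S. S \<subseteq> E \<Longrightarrow> \<omega> S \<ge> 0" "\<exists>S\<subseteq>E. \<omega> S \<noteq> 0" "\<forall>c\<in>E. y c > 0"
  shows "genpoly E \<omega> y > 0"
proof -
  obtain S where S: "S \<subseteq> E" "\<omega> S \<noteq> 0"
    using assms(3) by blast
  have prod_pos: "(\<Prod>c\<in>R. y c) > 0" if "R \<subseteq> E" for R
    using that assms(4) by (intro prod_pos) auto
  have term_nonneg: "0 \<le> \<omega> R * (\<Prod>c\<in>R. y c)" if "R \<subseteq> E" for R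
    using assms(2)[OF that] prod_pos[OF that] by simp
  have "0 < \<omega> S * (\<Prod>c\<in>S. y c)"
    using S assms(2)[of S] prod_pos[of S] by simp
  also have "\<dots> \<le> genpoly E \<omega> y"
    unfolding genpoly_def using S assms(1) term_nonneg by (intro member_le_sum) auto
  finally show ?thesis .
qed

lemma local_submodular_insert:
  fixes L :: "'a set \<Rightarrow> 'b::ordered_ab_group_add"
  assumes local: "\<And>W e f. W \<subseteq> E \<Longrightarrow> e \<in> E - W \<Longrightarrow> f \<in> E - W \<Longrightarrow> e \<noteq> f \<Longrightarrow>
      L W + L (insert e (insert f W)) \<le> L (insert e W) + L (insert f W)"
    and "finite B" "W \<union> B \<subseteq> E" "a \<in> E - (W \<union> B)"
  shows "L W + L (insert a (W \<union> B)) \<le> L (insert a W) + L (W \<union> B)"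
  using assms(2-4)
proof (induction B rule: finite_induct)
  case empty
  then show ?case by simp
next
  case (insert b B)
  show ?case
  proof (cases "b \<in> W")
    case True
    then show ?thesis
      using insert by (simp add: insert_absorb)
  next
    case False
    have IH: "L W + L (insert a (W \<union> B)) \<le> L (insert a W) + L (W \<union> B)"
      using insert by auto
    have step: "L (W \<union> B) + L (insert a (insert b (W \<union> B)))
        \<le> L (insert a (W \<union> B)) + L (insert b (W \<union> B))"
      using insert False by (intro local) auto
    have "L W + L (insert a (insert b (W \<union> B))) + (L (insert a (W \<union> B)) + L (W \<union> B))
        \<le> L (insert a W) + L (insert b (W \<union> B)) + (L (insert a (W \<union> B)) + L (W \<union> B))"
      using add_mono[OF IH step] by (simp add: ac_simps)
    then show ?thesis
      by simp
  qed
qed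

lemma local_submodular_imp_submodular:
  fixes L :: "'a set \<Rightarrow> 'b::ordered_ab_group_add"
  assumes local: "\<And>W e f. W \<subseteq> E \<Longrightarrow> e \<in> E - W \<Longrightarrow> f \<in> E - W \<Longrightarrow> e \<noteq> f \<Longrightarrow>
      L W + L (insert e (insert f W)) \<le> L (insert e W) + L (insert f W)"
    and "finite E" "S \<subseteq> E" "T \<subseteq> E"
  shows "L (S \<inter> T) + L (S \<union> T) \<le> L S + L T"
proof -
  have union: "L W + L (W \<union> A \<union> B) \<le> L (W \<union> A) + L (W \<union> B)"
    if "finite A" "W \<union> A \<union> B \<subseteq> E" "A \<inter> (W \<union> B) = {}" for W A B
    using that
  proof (induction A rule: finite_induct)
    case empty
    then show ?case by simp
  next
    case (insert a A)
    have IH: "L W + L (W \<union> A \<union> B) \<le> L (W \<union> A) + L (W \<union> B)"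
      using insert by auto
    have step: "L (W \<union> A) + L (insert a (W \<union> A \<union> B)) \<le> L (insert a (W \<union> A)) + L (W \<union> A \<union> B)"
      using insert.prems insert.hyps(2) finite_subset[OF _ assms(2)]
      by (intro local_submodular_insert[where L = L, OF local]) auto
    have "L W + L (insert a (W \<union> A \<union> B)) + (L (W \<union> A) + L (W \<union> A \<union> B))
        \<le> L (insert a (W \<union> A)) + L (W \<union> B) + (L (W \<union> A) + L (W \<union> A \<union> B))"
      using add_mono[OF IH step] by (simp add: ac_simps)
    then show ?case
      by simp
  qed
  have "L (S \<inter> T) + L (S \<inter> T \<union> (S - T) \<union> (T - S)) \<le> L (S \<inter> T \<union> (S - T)) + L (S \<inter> T \<union> (T - S))"
    using assms(2-4) finite_subset[of "S - T" E] by (intro union) auto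
  moreover have "S \<inter> T \<union> (S - T) = S" "S \<inter> T \<union> (T - S) = T" "S \<inter> T \<union> (S - T) \<union> (T - S) = S \<union> T"
    by blast+
  ultimately show ?thesis
    by simp
qed

definition set_weights :: "real \<Rightarrow> 'a set \<Rightarrow> 'a \<Rightarrow> real" where
  "set_weights l W c = (if c \<in> W then l else inverse l)"

lemma genpoly_set_weights_log_submodular:
  assumes "finite E" "\<And>S. S \<subseteq> E \<Longrightarrow> \<omega> S \<ge> 0" "\<exists>S\<subseteq>E. \<omega> S \<noteq> 0" "rayleigh E \<omega>"
    and "1 \<le> l" "S \<subseteq> E" "T \<subseteq> E"
  shows "genpoly E \<omega> (set_weights l (S \<inter> T)) * genpoly E \<omega> (set_weights l (S \<union> T))
    \<le> genpoly E \<omega> (set_weights l S) * genpoly E \<omega> (set_weights l T)"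
proof -
  define Z where "Z W = genpoly E \<omega> (set_weights l W)" for W
  have weights_pos: "\<forall>c\<in>E. set_weights l W c > 0" for W
    using assms(5) by (simp add: set_weights_def)
  have Z_pos: "Z W > 0" for W
    unfolding Z_def using genpoly_pos[OF assms(1-3) weights_pos] .
  have "ln (Z W) + ln (Z (insert e (insert f W))) \<le> ln (Z (insert e W)) + ln (Z (insert f W))"
    if "W \<subseteq> E" "e \<in> E - W" "f \<in> E - W" "e \<noteq> f" for W e f
  proof -
    have "inverse l \<le> l"
      using assms(5) by (simp add: inverse_le_1_iff order_trans[OF _ assms(5)])
    moreover have "(set_weights l W)(e := inverse l, f := inverse l) = set_weights l W"
      "(set_weights l W)(e := l, f := l) = set_weights l (insert e (insert f W))"
      "(set_weights l W)(e := l, f := inverse l) = set_weights l (insert e W)"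
      "(set_weights l W)(e := inverse l, f := l) = set_weights l (insert f W)"
      using that by (auto simp: set_weights_def fun_eq_iff)
    ultimately have "Z W * Z (insert e (insert f W)) \<le> Z (insert e W) * Z (insert f W)"
      using rayleigh_genpoly_fun_upd2_le[OF assms(1) _ _ that(4) assms(4) weights_pos[of W],
          where s = "inverse l" and s' = l and t = "inverse l" and t' = l] that
      unfolding Z_def by simp
    then have "ln (Z W * Z (insert e (insert f W))) \<le> ln (Z (insert e W) * Z (insert f W))"
      using Z_pos by simp
    then show ?thesis
      using Z_pos by (simp add: ln_mult_pos)
  qed
  then have "ln (Z (S \<inter> T)) + ln (Z (S \<union> T)) \<le> ln (Z S) + ln (Z T)"
    using assms(1,6,7) by (rule local_submodular_imp_submodular)
  then have "ln (Z (S \<inter> T) * Z (S \<union> T)) \<le> ln (Z S * Z T)"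
    using Z_pos by (simp add: ln_mult_pos)
  then show ?thesis
    using Z_pos unfolding Z_def by simp
qed

lemma prod_set_weights_div:
  assumes "finite R" "finite W" "l > 0"
  shows "(\<Prod>c\<in>R. set_weights l W c) / l ^ card W = inverse l ^ (card (R - W) + card (W - R))"
proof -
  have "(\<Prod>c\<in>R. set_weights l W c) = l ^ card (R \<inter> W) * inverse l ^ card (R - W)"
    unfolding set_weights_def using assms(1) by (simp add: prod.If_cases Diff_eq)
  moreover have "card W = card (R \<inter> W) + card (W - R)"
    using card_Int_Diff[OF assms(2), of R] by (simp add: Int_commute)
  ultimately show ?thesis
    using assms(3) by (simp add: power_add field_simps)
qed

lemma genpoly_set_weights_tendsto:
  assumes "finite E" "W \<subseteq> E"
  shows "((\<lambda>l. genpoly E \<omega> (set_weights l W) / l ^ card W) \<longlongrightarrow> \<omega> W) at_top"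
proof -
  have fin_W: "finite W"
    using assms finite_subset by blast
  have expand: "genpoly E \<omega> (set_weights l W) / l ^ card W
      = (\<Sum>R\<in>Pow E. \<omega> R * inverse l ^ (card (R - W) + card (W - R)))" if "l > 0" for l :: real
    unfolding genpoly_def sum_divide_distrib
    using prod_set_weights_div[OF finite_subset[OF _ assms(1)] fin_W that]
    by (auto simp flip: times_divide_eq_right intro!: sum.cong)
  have "((\<lambda>l. \<Sum>R\<in>Pow E. \<omega> R * inverse l ^ (card (R - W) + card (W - R)))
      \<longlongrightarrow> (\<Sum>R\<in>Pow E. \<omega> R * 0 ^ (card (R - W) + card (W - R)))) at_top"
    by (intro tendsto_intros tendsto_inverse_0_at_top filterlim_ident)
  also have "(\<Sum>R\<in>Pow E. \<omega> R * (0::real) ^ (card (R - W) + card (W - R))) = \<omega> W"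
  proof -
    have "card (R - W) + card (W - R) = 0 \<longleftrightarrow> R = W" if "R \<subseteq> E" for R
      using finite_subset[OF that assms(1)] fin_W by auto
    then have "(\<Sum>R\<in>Pow E. \<omega> R * (0::real) ^ (card (R - W) + card (W - R)))
        = (\<Sum>R\<in>Pow E. if R = W then \<omega> R else 0)"
      by (intro sum.cong) (auto simp: power_0_left)
    then show ?thesis
      using assms by simp
  qed
  finally have "((\<lambda>l. \<Sum>R\<in>Pow E. \<omega> R * inverse l ^ (card (R - W) + card (W - R))) \<longlongrightarrow> \<omega> W) at_top" .
  moreover have "eventually (\<lambda>l. genpoly E \<omega> (set_weights l W) / l ^ card W
      = (\<Sum>R\<in>Pow E. \<omega> R * inverse l ^ (card (R - W) + card (W - R)))) at_top"
    using eventually_gt_at_top[of 0] by (rule eventually_mono) (rule expand)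
  ultimately show ?thesis
    by (simp add: tendsto_cong)
qed

theorem theorem4p4:
  fixes E :: "'a set" and \<omega> :: "'a set \<Rightarrow> real"
  assumes "finite E"
    and "\<And>S. S \<subseteq> E \<Longrightarrow> \<omega> S \<ge> 0"
    and "\<exists>S\<subseteq>E. \<omega> S \<noteq> 0"
    and "rayleigh E \<omega>"
    and "S \<subseteq> E" and "T \<subseteq> E"
  shows "\<omega> S * \<omega> T \<ge> \<omega> (S \<inter> T) * \<omega> (S \<union> T)"
proof -
  define Z where "Z W l = genpoly E \<omega> (set_weights l W)" for W l
  define N where "N W l = Z W l / l ^ card W" for W l
  have cards: "card (S \<inter> T) + card (S \<union> T) = card S + card T"
    using card_Un_Int assms(1,5,6) finite_subset by (metis add.commute)
  have "eventually (\<lambda>l. N (S \<inter> T) l * N (S \<union> T) l \<le> N S l * N T l) at_top"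
    using eventually_ge_at_top[of "1::real"]
  proof eventually_elim
    case (elim l)
    have "N (S \<inter> T) l * N (S \<union> T) l = Z (S \<inter> T) l * Z (S \<union> T) l / l ^ (card S + card T)"
      unfolding N_def by (simp add: power_add flip: cards)
    also have "\<dots> \<le> Z S l * Z T l / l ^ (card S + card T)"
      using genpoly_set_weights_log_submodular[OF assms(1-4) elim assms(5,6)] elim
      unfolding Z_def by (simp add: divide_right_mono)
    also have "\<dots> = N S l * N T l"
      unfolding N_def by (simp add: power_add)
    finally show ?case .
  qed
  moreover have lim: "(N W \<longlongrightarrow> \<omega> W) at_top" if "W \<subseteq> E" for W
    unfolding N_def Z_def using assms(1) that by (rule genpoly_set_weights_tendsto)
  then have "((\<lambda>l. N (S \<inter> T) l * N (S \<union> T) l) \<longlongrightarrow> \<omega> (S \<inter> T) * \<omega> (S \<union> T)) at_top"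
    "((\<lambda>l. N S l * N T l) \<longlongrightarrow> \<omega> S * \<omega> T) at_top"
    using assms(5,6) by (auto intro!: tendsto_mult lim)
  ultimately show ?thesis
    using tendsto_le[OF trivial_limit_at_top_linorder] by blast
qed

end
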